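(* Let $L,V,W,K,T>0$, $\pi\in(0,1)$, $\bar K=\frac{W}{V+W}K$, $C=V\bar K$. Write $\frac{L}{V}=\theta_1T$ with $\theta_1=j_1+\alpha_1$, $j_1=\lfloor \frac{L}{VT}\rfloor$, $0\le\alpha_1<1$, and $\frac{L}{W}=\theta_2T$ with $\theta_2=j_2+\alpha_2$, $j_2=\lfloor\frac{L}{WT}\rfloor$, $0\le\alpha_2<1$. Define $$k_1=\frac{j_1+\min\{\alpha_1/\pi,1\}}{j_1+\alpha_1}\,\pi\bar K,\qquad k_2=K-\frac{j_2+\min\{\alpha_2/\pi,1\}}{j_2+\alpha_2}\,\pi\frac{C}{W}.$$ Then $$\pi\bar K\le k_1\le\bar K\le k_2\le K-\pi\frac{C}{W}.$$ Moreover, $k_1=\pi\bar K$ if and only if $\alpha_1=0$; $k_1=\bar K$ if and only if $\pi T\ge \frac LV$; $k_2=K-\pi\frac CW$ if and only if $\alpha_2=0$; and $k_2=\bar K$ if and only if $\pi T\ge\frac LW$. *)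

theory Defs
  imports Complex_Main
begin

end

theory Submission
  imports Defs
begin

text \<open>Both \<open>k\<^sub>1\<close> and \<open>K - k\<^sub>2\<close> are a
  multiple \<open>r\<close> of a positive quantity (\<open>Kbar\<close>, resp. \<open>C / W = K - Kbar\<close>), where
  \<open>r = (j p + min \<alpha> p) / \<theta>\<close>. Comparing the numerator with \<open>p \<theta> = j p + \<alpha> p\<close> and with
  \<open>\<theta> = j + \<alpha>\<close> gives \<open>p \<le> r \<le> 1\<close>: the lower gap \<open>min \<alpha> p - \<alpha> p\<close> vanishes iff \<open>\<alpha> = 0\<close>,
  and the upper gap \<open>j (1 - p) + (\<alpha> - min \<alpha> p)\<close> vanishes iff \<open>j = 0\<close> and \<open>\<alpha> \<le> p\<close>,
  i.e. iff \<open>\<theta> \<le> p\<close>.\<close>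

definition step_ratio :: "real \<Rightarrow> real \<Rightarrow> real" where
  "step_ratio p \<theta> = (\<lfloor>\<theta>\<rfloor> + min (frac \<theta> / p) 1) / \<theta> * p"

lemma step_ratio_eq:
  fixes p \<theta> :: real
  assumes "0 < p"
  shows "step_ratio p \<theta> = (\<lfloor>\<theta>\<rfloor> * p + min (frac \<theta>) p) / \<theta>"
proof -
  have "min (frac \<theta> / p) 1 * p = min (frac \<theta>) p"
    using assms by (auto simp: min_def field_simps)
  then show ?thesis
    unfolding step_ratio_def by (simp add: field_simps)
qed

lemma floor_frac_numerator_ge:
  fixes x p :: real
  assumes "0 < p" "p < 1"
  shows "p * x \<le> \<lfloor>x\<rfloor> * p + min (frac x) p"
    and "p * x = \<lfloor>x\<rfloor> * p + min (frac x) p \<longleftrightarrow> frac x = 0"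
proof -
  have px: "p * x = \<lfloor>x\<rfloor> * p + p * frac x"
    by (simp add: frac_def algebra_simps)
  have "p * frac x \<le> frac x" "p * frac x \<le> p"
    using assms frac_lt_1[of x] by (simp_all add: mult_left_le_one_le mult_left_le)
  then have ge: "p * frac x \<le> min (frac x) p"
    by simp
  have gt: "p * frac x < min (frac x) p" if "frac x \<noteq> 0"
    using assms frac_lt_1[of x] frac_ge_0[of x] that by simp
  show "p * x \<le> \<lfloor>x\<rfloor> * p + min (frac x) p"
    using px ge by linarith
  show "p * x = \<lfloor>x\<rfloor> * p + min (frac x) p \<longleftrightarrow> frac x = 0"
  proof
    assume "p * x = \<lfloor>x\<rfloor> * p + min (frac x) p"
    then show "frac x = 0"
      using px gt by (metis add_left_cancel less_irrefl)
  next
    assume "frac x = 0"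
    then show "p * x = \<lfloor>x\<rfloor> * p + min (frac x) p"
      using px assms(1) by (simp del: frac_eq_0_iff)
  qed
qed

lemma floor_frac_numerator_le:
  fixes x p :: real
  assumes "0 < p" "p < 1" "0 \<le> x"
  shows "\<lfloor>x\<rfloor> * p + min (frac x) p \<le> x"
    and "\<lfloor>x\<rfloor> * p + min (frac x) p = x \<longleftrightarrow> x \<le> p"
proof -
  have x: "x = \<lfloor>x\<rfloor> + frac x"
    by (simp add: frac_def)
  have "\<lfloor>x\<rfloor> \<ge> 0"
    using assms by simp
  then have jp: "\<lfloor>x\<rfloor> * p \<le> \<lfloor>x\<rfloor>"
    using assms by (simp add: mult_left_le)
  then show "\<lfloor>x\<rfloor> * p + min (frac x) p \<le> x"
    by (subst (3) x) linarith
  show "\<lfloor>x\<rfloor> * p + min (frac x) p = x \<longleftrightarrow> x \<le> p"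
  proof
    assume "\<lfloor>x\<rfloor> * p + min (frac x) p = x"
    then have "\<lfloor>x\<rfloor> * p = \<lfloor>x\<rfloor>" and "min (frac x) p = frac x"
      using jp by (subst (asm) (3) x, linarith)+
    then have "\<lfloor>x\<rfloor> = 0" and "frac x \<le> p"
      using assms by (auto simp: min_def split: if_splits)
    then show "x \<le> p"
      by (subst x) simp
  next
    assume "x \<le> p"
    then have "\<lfloor>x\<rfloor> = 0"
      using assms by (simp add: floor_eq_iff)
    with \<open>x \<le> p\<close> show "\<lfloor>x\<rfloor> * p + min (frac x) p = x"
      by (simp add: frac_def)
  qed
qed

lemma step_ratio_bounds:
  assumes "0 < p" "p < 1" "0 < \<theta>"
  shows "p \<le> step_ratio p \<theta>" "step_ratio p \<theta> \<le> 1"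
    and "step_ratio p \<theta> = p \<longleftrightarrow> frac \<theta> = 0"
    and "step_ratio p \<theta> = 1 \<longleftrightarrow> \<theta> \<le> p"
proof -
  define N where "N = \<lfloor>\<theta>\<rfloor> * p + min (frac \<theta>) p"
  have r: "step_ratio p \<theta> = N / \<theta>"
    using step_ratio_eq[OF assms(1)] N_def by simp
  have "p * \<theta> \<le> N" "p * \<theta> = N \<longleftrightarrow> frac \<theta> = 0"
    unfolding N_def by (fact floor_frac_numerator_ge[OF assms(1,2)])+
  moreover have "N \<le> \<theta>" "N = \<theta> \<longleftrightarrow> \<theta> \<le> p"
    unfolding N_def using assms by (simp_all add: floor_frac_numerator_le)
  ultimately show "p \<le> step_ratio p \<theta>" "step_ratio p \<theta> \<le> 1"
    and "step_ratio p \<theta> = p \<longleftrightarrow> frac \<theta> = 0"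
    and "step_ratio p \<theta> = 1 \<longleftrightarrow> \<theta> \<le> p"
    using assms(3) unfolding r
    by (auto simp: pos_le_divide_eq divide_eq_eq mult.commute simp del: frac_eq_0_iff)
qed

lemma scaled_ratio_bounds:
  fixes r p x :: real
  assumes "p \<le> r" "r \<le> 1" "0 < x"
  shows "p * x \<le> r * x" "r * x \<le> x"
    and "r * x = p * x \<longleftrightarrow> r = p" "r * x = x \<longleftrightarrow> r = 1"
  using assms by (simp_all add: mult_right_mono)

theorem lemma3p1:
  fixes L V W K T p Kbar C \<theta>\<^sub>1 \<theta>\<^sub>2 \<alpha>\<^sub>1 \<alpha>\<^sub>2 k\<^sub>1 k\<^sub>2 :: real
    and j\<^sub>1 j\<^sub>2 :: int
  assumes pos: "L > 0" "V > 0" "W > 0" "K > 0" "T > 0"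
    and p: "0 < p" "p < 1"
    and Kbar_def: "Kbar = W / (V + W) * K"
    and C_def: "C = V * Kbar"
    and th1: "L / V = \<theta>\<^sub>1 * T" and j1: "j\<^sub>1 = \<lfloor>L / (V * T)\<rfloor>" and a1: "\<theta>\<^sub>1 = j\<^sub>1 + \<alpha>\<^sub>1"
    and th2: "L / W = \<theta>\<^sub>2 * T" and j2: "j\<^sub>2 = \<lfloor>L / (W * T)\<rfloor>" and a2: "\<theta>\<^sub>2 = j\<^sub>2 + \<alpha>\<^sub>2"
    and k1_def: "k\<^sub>1 = (j\<^sub>1 + min (\<alpha>\<^sub>1 / p) 1) / (j\<^sub>1 + \<alpha>\<^sub>1) * p * Kbar"
    and k2_def: "k\<^sub>2 = K - (j\<^sub>2 + min (\<alpha>\<^sub>2 / p) 1) / (j\<^sub>2 + \<alpha>\<^sub>2) * p * (C / W)"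
  shows "p * Kbar \<le> k\<^sub>1 \<and> k\<^sub>1 \<le> Kbar \<and> Kbar \<le> k\<^sub>2 \<and> k\<^sub>2 \<le> K - p * (C / W)
    \<and> (k\<^sub>1 = p * Kbar \<longleftrightarrow> \<alpha>\<^sub>1 = 0)
    \<and> (k\<^sub>1 = Kbar \<longleftrightarrow> p * T \<ge> L / V)
    \<and> (k\<^sub>2 = K - p * (C / W) \<longleftrightarrow> \<alpha>\<^sub>2 = 0)
    \<and> (k\<^sub>2 = Kbar \<longleftrightarrow> p * T \<ge> L / W)"
proof -
  have \<theta>1: "\<theta>\<^sub>1 = L / (V * T)" and \<theta>2: "\<theta>\<^sub>2 = L / (W * T)"
    using th1 th2 pos by (simp_all add: field_simps)
  then have \<theta>_pos: "\<theta>\<^sub>1 > 0" "\<theta>\<^sub>2 > 0"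
    using pos by simp_all
  have floor: "j\<^sub>1 = \<lfloor>\<theta>\<^sub>1\<rfloor>" "j\<^sub>2 = \<lfloor>\<theta>\<^sub>2\<rfloor>"
    using j1 j2 \<theta>1 \<theta>2 by simp_all
  then have frac: "\<alpha>\<^sub>1 = frac \<theta>\<^sub>1" "\<alpha>\<^sub>2 = frac \<theta>\<^sub>2"
    using a1 a2 by (simp_all add: frac_def)
  have k1: "k\<^sub>1 = step_ratio p \<theta>\<^sub>1 * Kbar"
    using k1_def unfolding a1[symmetric] unfolding floor frac by (simp add: step_ratio_def)
  have k2: "K - k\<^sub>2 = step_ratio p \<theta>\<^sub>2 * (C / W)"
    using k2_def unfolding a2[symmetric] unfolding floor frac by (simp add: step_ratio_def)
  have Kbar: "Kbar > 0" "C / W = K - Kbar"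
    using pos Kbar_def C_def by (simp, simp add: field_simps)
  have CW: "C / W > 0"
    using pos Kbar(1) C_def by simp
  have T1: "p * T \<ge> L / V \<longleftrightarrow> \<theta>\<^sub>1 \<le> p" and T2: "p * T \<ge> L / W \<longleftrightarrow> \<theta>\<^sub>2 \<le> p"
    using th1 th2 pos by simp_all
  note R1 = scaled_ratio_bounds[OF step_ratio_bounds(1,2)[OF p \<theta>_pos(1)] Kbar(1)]
    and R2 = scaled_ratio_bounds[OF step_ratio_bounds(1,2)[OF p \<theta>_pos(2)] CW]
    and S1 = step_ratio_bounds(3,4)[OF p \<theta>_pos(1)]
    and S2 = step_ratio_bounds(3,4)[OF p \<theta>_pos(2)]
  have k2_iff: "k\<^sub>2 = K - p * (C / W) \<longleftrightarrow> step_ratio p \<theta>\<^sub>2 * (C / W) = p * (C / W)"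
      "k\<^sub>2 = Kbar \<longleftrightarrow> step_ratio p \<theta>\<^sub>2 * (C / W) = C / W"
    using k2 Kbar(2) by auto
  have "p * Kbar \<le> k\<^sub>1" "k\<^sub>1 \<le> Kbar"
      "k\<^sub>1 = p * Kbar \<longleftrightarrow> \<alpha>\<^sub>1 = 0" "k\<^sub>1 = Kbar \<longleftrightarrow> p * T \<ge> L / V"
    unfolding k1 T1 frac using R1 S1 by simp_all
  moreover have "Kbar \<le> k\<^sub>2" "k\<^sub>2 \<le> K - p * (C / W)"
      "k\<^sub>2 = K - p * (C / W) \<longleftrightarrow> \<alpha>\<^sub>2 = 0" "k\<^sub>2 = Kbar \<longleftrightarrow> p * T \<ge> L / W"
    unfolding k2_iff T2 frac using k2 Kbar(2) R2 S2 by (linarith, linarith, simp_all del: frac_eq_0_iff)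
  ultimately show ?thesis
    by blast
qed

end
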